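(* Let $\zeta:(0,\pi]\to\mathbb R^p$ be continuously differentiable with $\|\zeta(\lambda)\|\le K|\log\lambda|^\ell$ for some $\ell\ge1$ and $\|\partial\zeta(\lambda)/\partial\lambda\|\le K\lambda^{-1}|\log\lambda|^{\ell-1}$ for all $\lambda\in(0,\pi]$. For $0\le\mu<\vartheta\le\pi$ and integers $s$ define $$c_s(\mu,\vartheta)=\frac{2}{T\tilde T^{1/2}}\sum_{p=[\tilde T\mu/\pi]+1}^{[\tilde T\vartheta/\pi]}\zeta(\lambda_p)\cos(s\lambda_p).$$ Then for $0\le\mu<\vartheta_1,\vartheta_2\le\pi$, as $T\to\infty$, $$\sum_{t=1}^{T-1}\sum_{s=1}^{T-t}c_s(\mu,\vartheta_1)c_s'(\mu,\vartheta_2)=g(\mu,\vartheta_1,\vartheta_2)(1+o(1)),$$ where $g(\mu,\vartheta_1,\vartheta_2)=\frac1\pi\int_\mu^{\vartheta_1\wedge\vartheta_2}\zeta(u)\zeta'(u)du-\Big(\frac1\pi\int_\mu^{\vartheta_1}\zeta(u)du\Big)\Big(\frac1\pi\int_\mu^{\vartheta_2}\zeta'(u)du\Big)$.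
   Context: $T$ is a positive integer, $\tilde T=[T/2]$ (integer part), and $\lambda_p=2\pi p/T$. Vectors are column vectors and $'$ denotes transpose. *)

theory Defs
  imports "HOL-Analysis.Analysis"
begin

definition rpow :: "real \<Rightarrow> real \<Rightarrow> real" where
  "rpow x a = (if x = 0 then (if a = 0 then 1 else 0) else x powr a)"

definition lam :: "nat \<Rightarrow> int \<Rightarrow> real" where
  "lam T p = 2 * pi * real_of_int p / real T"

definition outer :: "real ^ 'p \<Rightarrow> real ^ 'p \<Rightarrow> real ^ 'p ^ 'p" where
  "outer a b = (\<chi> i j. a $ i * b $ j)"

text \<open>c_s(mu, theta), with tilde T = T div 2.\<close>
definition cs :: "(real \<Rightarrow> real ^ 'p) \<Rightarrow> nat \<Rightarrow> nat \<Rightarrow> real \<Rightarrow> real \<Rightarrow> real ^ 'p" where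
  "cs \<zeta> T s \<mu> \<theta> =
     (2 / (real T * sqrt (real (T div 2)))) *\<^sub>R
     (\<Sum>p \<in> {\<lfloor>real (T div 2) * \<mu> / pi\<rfloor> + 1 .. \<lfloor>real (T div 2) * \<theta> / pi\<rfloor>}.
        cos (real s * lam T p) *\<^sub>R \<zeta> (lam T p))"

definition glim :: "(real \<Rightarrow> real ^ 'p) \<Rightarrow> real \<Rightarrow> real \<Rightarrow> real \<Rightarrow> real ^ 'p ^ 'p" where
  "glim \<zeta> \<mu> \<theta>1 \<theta>2 =
     (1 / pi) *\<^sub>R integral {\<mu> .. min \<theta>1 \<theta>2} (\<lambda>u. outer (\<zeta> u) (\<zeta> u))
     - outer ((1 / pi) *\<^sub>R integral {\<mu> .. \<theta>1} \<zeta>) ((1 / pi) *\<^sub>R integral {\<mu> .. \<theta>2} \<zeta>)"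

end

theory Submission
  imports Defs
begin

text \<open>
  Summing over \<open>t\<close> first turns the double sum into \<open>\<Sum>\<^sub>s (T - s) c\<^sub>s c\<^sub>s'\<close>, and expanding
  \<open>c\<^sub>s\<close> leaves the Fejer-type kernel \<open>\<Sum>\<^sub>s (T - s) cos (s \<lambda>\<^sub>p) cos (s \<lambda>\<^sub>q)\<close>. Summing geometric
  series over the \<open>T\<close>-th roots of unity shows that for \<open>1 \<le> p, q \<le> T/2\<close> this kernel is \<open>T\<^sup>2/4\<close>
  on the diagonal (twice that at \<open>p = q = T/2\<close>) minus \<open>T/2\<close> everywhere. Hence the double sum
  is exactly a Riemann sum of \<open>\<zeta> \<zeta>'\<close> over \<open>[\<mu>, min \<theta>1 \<theta>2]\<close> minus the product of the
  Riemann sums of \<open>\<zeta>\<close> over \<open>[\<mu>, \<theta>1]\<close> and \<open>[\<mu>, \<theta>2]\<close>, up to one boundary term at \<open>\<lambda> = \<pi>\<close> of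
  order \<open>1/T\<close>. The Riemann sums converge by dominated convergence of the associated step
  functions: the logarithmic bound on \<open>\<zeta>\<close> yields the decreasing majorant \<open>K (6 - ln x)\<^sup>\<ell>\<close>,
  integrable at \<open>0\<close>.
\<close>

section \<open>A logarithmic majorant\<close>

lemma ln_lt_three: "x \<in> {0<..pi} \<Longrightarrow> ln x < 3"
  using ln_le_minus_one[of x] pi_less_4 by auto

lemma rpow_abs_ln_le_six_minus_ln_powr:
  assumes x: "x \<in> {0<..pi}" and e: "e \<ge> 0"
  shows "rpow \<bar>ln x\<bar> e \<le> (6 - ln x) powr e"
proof (cases "ln x = 0")
  case False
  then show ?thesis
    using ln_lt_three[OF x] e by (auto simp: rpow_def intro: powr_mono2)
qed (use ln_lt_three[OF x] in \<open>simp add: rpow_def\<close>)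

lemma antimono_on_six_minus_ln_powr:
  assumes "e \<ge> 0"
  shows "antimono_on {0<..pi} (\<lambda>x. (6 - ln x) powr e)"
proof (rule monotone_onI)
  fix x y assume "x \<in> {0<..pi}" "y \<in> {0<..pi}" "x \<le> y"
  then show "(6 - ln y) powr e \<le> (6 - ln x) powr e"
    using ln_lt_three[of y] assms by (intro powr_mono2) auto
qed

lemma integrable_six_minus_ln_powr:
  fixes e :: real
  assumes e: "e > 0"
  shows "(\<lambda>x. (6 - ln x) powr e) integrable_on {0<..pi}"
proof (rule measurable_bounded_by_integrable_imp_integrable_real)
  show "(\<lambda>x. (6 - ln x) powr e) \<in> borel_measurable (lebesgue_on {0<..pi})"
  proof (rule continuous_imp_measurable_on_sets_lebesgue)
    show "continuous_on {0<..pi} (\<lambda>x. (6 - ln x) powr e)"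
      by (intro continuous_intros) (auto dest: ln_lt_three)
  qed auto
  define C where "C = (6 + 2 * e) powr e"
  have "(\<lambda>x. 1 + x powr (-1/2)) integrable_on {0<..pi}"
  proof (rule integrable_add)
    show "(\<lambda>x. 1::real) integrable_on {0<..pi}"
      by (rule integrable_spike_set[of _ "{0..pi}"]) (auto intro: negligible_subset[of "{0}"])
  qed (rule integrable_on_powr_from_0'; simp)
  then show "(\<lambda>x. C * (1 + x powr (-1/2))) integrable_on {0<..pi}"
    by (rule integrable_on_mult_right)
  show "\<bar>(6 - ln x) powr e\<bar> \<le> C * (1 + x powr (-1/2))" if x: "x \<in> {0<..pi}" for x
  proof -
    \<comment> \<open>\<open>ln z \<le> z - 1\<close> at \<open>z = y\<close> gives \<open>-ln x \<le> 2 e y\<close>, and \<open>y powr e = x powr (-1/2)\<close>\<close>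
    define y where "y = x powr (- 1 / (2 * e))"
    have x0: "x > 0" using x by simp
    have "ln y \<le> y - 1" using x0 by (intro ln_le_minus_one) (simp add: y_def)
    then have "- ln x \<le> 2 * e * y" using e x0 by (simp add: y_def field_simps)
    moreover have "2 * e * y \<le> 2 * e * max 1 y" using e by (intro mult_left_mono) auto
    ultimately have "6 - ln x \<le> (6 + 2 * e) * max 1 y"
      using max.cobounded1[of 1 y] unfolding distrib_right by linarith
    then have "(6 - ln x) powr e \<le> ((6 + 2 * e) * max 1 y) powr e"
      using ln_lt_three[OF x] e by (intro powr_mono2) auto
    also have "\<dots> = C * max 1 y powr e"
      using e x0 by (simp add: C_def powr_mult y_def)
    also have "max 1 y powr e \<le> 1 + y powr e"
      using e by (auto simp: max_def)
    also have "y powr e = x powr (-1/2)" using e x0 by (simp add: y_def powr_powr)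
    finally show ?thesis using ln_lt_three[OF x] e by (simp add: C_def mult_left_mono)
  qed
qed auto

lemma six_minus_ln_powr_majorant:
  fixes K e :: real
  assumes "K \<ge> 0" "e > 0"
  shows "antimono_on {0<..pi} (\<lambda>x. K * (6 - ln x) powr e)"
    "(\<lambda>x. K * (6 - ln x) powr e) integrable_on {0<..pi}"
    "(\<lambda>x. (K * (6 - ln x) powr e)\<^sup>2) integrable_on {0<..pi}"
proof -
  show "antimono_on {0<..pi} (\<lambda>x. K * (6 - ln x) powr e)"
    using antimono_on_six_minus_ln_powr[of e] assms
    by (auto simp: monotone_on_def intro: mult_left_mono)
  show "(\<lambda>x. K * (6 - ln x) powr e) integrable_on {0<..pi}"
    using integrable_six_minus_ln_powr[OF assms(2)] by (rule integrable_on_mult_right)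
  have "(K * (6 - ln x) powr e)\<^sup>2 = K\<^sup>2 * (6 - ln x) powr (2 * e)" for x
    by (simp add: power_mult_distrib power2_eq_square flip: powr_add)
  moreover have "(\<lambda>x. K\<^sup>2 * (6 - ln x) powr (2 * e)) integrable_on {0<..pi}"
    using integrable_six_minus_ln_powr[of "2 * e"] assms(2) by (intro integrable_on_mult_right) simp
  ultimately show "(\<lambda>x. (K * (6 - ln x) powr e)\<^sup>2) integrable_on {0<..pi}" by simp
qed

section \<open>Riemann sums over the Fourier frequencies\<close>

definition freq_indices :: "nat \<Rightarrow> real \<Rightarrow> real \<Rightarrow> int set" where
  "freq_indices T a b = {\<lfloor>real (T div 2) * a / pi\<rfloor> + 1 .. \<lfloor>real (T div 2) * b / pi\<rfloor>}"

lemma finite_freq_indices [simp]: "finite (freq_indices T a b)"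
  by (simp add: freq_indices_def)

lemma mem_freq_indices_iff:
  "p \<in> freq_indices T a b \<longleftrightarrow> real (T div 2) * a / pi < p \<and> p \<le> real (T div 2) * b / pi"
  by (simp add: freq_indices_def add1_zle_eq floor_less_iff le_floor_iff)

lemma freq_indices_bounds:
  assumes "0 \<le> a" "b \<le> pi" "p \<in> freq_indices T a b"
  shows "1 \<le> p" "2 * p \<le> int T"
proof -
  have "0 \<le> real (T div 2) * a / pi" using assms(1) by simp
  moreover have "real (T div 2) * b / pi \<le> real (T div 2)"
    using assms(2) by (simp add: divide_le_eq mult_left_mono)
  ultimately have "0 < p" "p \<le> int (T div 2)" using assms(3) by (auto simp: mem_freq_indices_iff)
  then show "1 \<le> p" "2 * p \<le> int T" by linarith+
qed

lemma freq_indices_Int_min: "freq_indices T a b1 \<inter> freq_indices T a b2 = freq_indices T a (min b1 b2)"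
proof -
  have incr: "mono (\<lambda>b. real (T div 2) * b / pi)"
    by (intro monoI divide_right_mono mult_left_mono) auto
  have "real (T div 2) * min b1 b2 / pi = min (real (T div 2) * b1 / pi) (real (T div 2) * b2 / pi)"
    by (simp add: min_of_mono[OF incr, of b1 b2])
  then show ?thesis by (auto simp: mem_freq_indices_iff)
qed

lemma freq_indices_zero [simp]: "freq_indices 0 a b = {}"
  by (simp add: freq_indices_def)

lemma lam_pos_le_pi:
  assumes "1 \<le> p" "2 * p \<le> int T"
  shows "0 < lam T p" "lam T p \<le> pi"
  using assms by (simp_all add: lam_def field_simps)

lemma lam_mono: "p \<le> q \<Longrightarrow> lam T p \<le> lam T q"
  by (simp add: lam_def divide_right_mono)

lemma lam_diff_one: "lam T p - lam T (p - 1) = 2 * pi / real T"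
  by (cases "T = 0") (simp_all add: lam_def field_simps)

lemma has_integral_const_Ioc:
  fixes c :: "'a::banach"
  assumes "u \<le> v"
  shows "((\<lambda>x. c) has_integral (v - u) *\<^sub>R c) {u<..v}"
proof -
  have "((\<lambda>x. c) has_integral (v - u) *\<^sub>R c) {u..v}"
    using has_integral_const_real[of c u v] assms by simp
  then show ?thesis
    by (rule has_integral_spike_set_eq[THEN iffD1, rotated 2])
      (auto intro: negligible_subset[of "{u}"])
qed

definition freq_cell :: "nat \<Rightarrow> real \<Rightarrow> int" where
  "freq_cell T x = \<lceil>x * real T / (2 * pi)\<rceil>"

lemma freq_cell_eq_iff:
  assumes "T > 0"
  shows "freq_cell T x = p \<longleftrightarrow> x \<in> {lam T (p - 1)<..lam T p}"
proof -
  have "x \<in> {lam T (p - 1)<..lam T p} \<longleftrightarrow>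
      real_of_int p - 1 < x * real T / (2 * pi) \<and> x * real T / (2 * pi) \<le> real_of_int p"
    using assms by (auto simp: lam_def field_simps)
  then show ?thesis by (simp add: freq_cell_def ceiling_eq_iff)
qed

lemma lam_freq_cell_bounds:
  assumes "T > 0"
  shows "x \<le> lam T (freq_cell T x)" "lam T (freq_cell T x) < x + 2 * pi / real T"
  using freq_cell_eq_iff[OF assms, of x "freq_cell T x"] lam_diff_one[of T "freq_cell T x"]
  by auto

lemma tendsto_lam_freq_cell: "(\<lambda>T. lam T (freq_cell T x)) \<longlonglongrightarrow> x"
proof (rule tendsto_sandwich[where f = "\<lambda>T. x" and h = "\<lambda>T. x + 2 * pi / real T"])
  show "\<forall>\<^sub>F T in sequentially. x \<le> lam T (freq_cell T x)"
    "\<forall>\<^sub>F T in sequentially. lam T (freq_cell T x) \<le> x + 2 * pi / real T"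
    using eventually_gt_at_top[of "0::nat"]
    by (eventually_elim, use lam_freq_cell_bounds less_imp_le in blast)+
  have "(\<lambda>T. 2 * pi / real T) \<longlonglongrightarrow> 0"
    by (intro tendsto_divide_0[OF tendsto_const] filterlim_at_top_imp_at_infinity
        filterlim_real_sequentially)
  then show "(\<lambda>T. x + 2 * pi / real T) \<longlonglongrightarrow> x"
    using tendsto_add[OF tendsto_const[of x]] by fastforce
qed simp

lemma eventually_freq_cell_gt_iff:
  assumes "0 \<le> c" "x \<noteq> c"
  shows "\<forall>\<^sub>F T in sequentially. real (T div 2) * c / pi < freq_cell T x \<longleftrightarrow> c < x"
proof (cases "c < x")
  case True
  show ?thesis
    using eventually_gt_at_top[of "0::nat"]
  proof eventually_elim
    case (elim T)
    have "2 * real (T div 2) * c \<le> real T * c"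
      using assms(1) by (intro mult_right_mono) linarith+
    then have "real (T div 2) * c / pi \<le> real T * c / (2 * pi)"
      by (simp add: field_simps)
    also have "\<dots> < x * real T / (2 * pi)" using True elim by (simp add: field_simps)
    also have "\<dots> \<le> freq_cell T x" by (simp add: freq_cell_def)
    finally show ?case using True by simp
  qed
next
  case False
  then have x: "x < c" using assms(2) by simp
  \<comment> \<open>this bound on \<open>T\<close> makes \<open>x T / 2\<pi> + 1 \<le> (T - 1) c / 2\<pi>\<close>\<close>
  have "\<forall>\<^sub>F T in sequentially. (2 * pi + c) / (c - x) \<le> real T"
    using filterlim_real_sequentially by (simp add: filterlim_at_top)
  then show ?thesis
  proof (rule eventually_mono)
    fix T assume T: "(2 * pi + c) / (c - x) \<le> real T"
    have "freq_cell T x < x * real T / (2 * pi) + 1"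
      using ceiling_correct[of "x * real T / (2 * pi)"] by (simp add: freq_cell_def)
    also have "\<dots> = (x * real T + 2 * pi) / (2 * pi)"
      by (simp add: field_simps)
    also have "\<dots> \<le> (real T - 1) * c / (2 * pi)"
      using T x by (intro divide_right_mono) (simp_all add: field_simps)
    also have "\<dots> \<le> real (T div 2) * c / pi"
    proof -
      have "(real T - 1) * c / (2 * pi) \<le> 2 * real (T div 2) * c / (2 * pi)"
        using assms(1) pi_gt_zero by (intro divide_right_mono mult_right_mono) linarith+
      then show ?thesis by simp
    qed
    finally show "real (T div 2) * c / pi < freq_cell T x \<longleftrightarrow> c < x" using x by simp
  qed
qed

lemma eventually_freq_cell_mem_iff:
  assumes "0 \<le> a" "0 \<le> b" "x \<noteq> a" "x \<noteq> b"
  shows "\<forall>\<^sub>F T in sequentially. freq_cell T x \<in> freq_indices T a b \<longleftrightarrow> x \<in> {a<..<b}"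
  using eventually_freq_cell_gt_iff[OF assms(1,3)] eventually_freq_cell_gt_iff[OF assms(2,4)]
  by eventually_elim (use assms(4) in \<open>auto simp: mem_freq_indices_iff not_less\<close>)

definition freq_step :: "(real \<Rightarrow> 'a::zero) \<Rightarrow> nat \<Rightarrow> real \<Rightarrow> real \<Rightarrow> real \<Rightarrow> 'a" where
  "freq_step f T a b x =
     (if freq_cell T x \<in> freq_indices T a b then f (lam T (freq_cell T x)) else 0)"

definition freq_Riemann_sum :: "(real \<Rightarrow> 'a::real_vector) \<Rightarrow> nat \<Rightarrow> real \<Rightarrow> real \<Rightarrow> 'a" where
  "freq_Riemann_sum f T a b = (2 * pi / real T) *\<^sub>R (\<Sum>p\<in>freq_indices T a b. f (lam T p))"

lemma has_integral_freq_step: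
  fixes f :: "real \<Rightarrow> 'a::banach"
  assumes "0 \<le> a" "b \<le> pi"
  shows "(freq_step f T a b has_integral freq_Riemann_sum f T a b) {0<..pi}"
proof (cases "T = 0")
  case True
  then show ?thesis by (simp add: freq_step_def[abs_def] freq_Riemann_sum_def)
next
  case False
  define cell where "cell p = {lam T (p - 1)<..lam T p}" for p
  have cell_iff: "x \<in> cell p \<longleftrightarrow> freq_cell T x = p" for x p
    using False by (simp add: cell_def freq_cell_eq_iff)
  have step_eq: "freq_step f T a b =
      (\<lambda>x. \<Sum>p\<in>freq_indices T a b. if x \<in> cell p then f (lam T p) else 0)"
    by (simp add: fun_eq_iff freq_step_def cell_iff)
  have "((\<lambda>x. if x \<in> cell p then f (lam T p) else 0) has_integral
          (2 * pi / real T) *\<^sub>R f (lam T p)) {0<..pi}"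
    if p: "p \<in> freq_indices T a b" for p
  proof -
    have "1 \<le> p" "2 * p \<le> int T" using freq_indices_bounds[OF assms p] by simp_all
    then have "0 \<le> lam T (p - 1)" "lam T p \<le> pi" "lam T (p - 1) \<le> lam T p"
      using lam_pos_le_pi[of p T] lam_mono[of "p - 1" p T] by (simp_all add: lam_def)
    then show ?thesis
      using has_integral_const_Ioc[of "lam T (p - 1)" "lam T p" "f (lam T p)"]
      by (subst has_integral_restrict) (auto simp: cell_def lam_diff_one)
  qed
  then show ?thesis
    unfolding step_eq freq_Riemann_sum_def scaleR_sum_right by (intro has_integral_sum) auto
qed

lemma norm_freq_step_le:
  assumes fG: "\<And>x. x \<in> {0<..pi} \<Longrightarrow> norm (f x) \<le> G x"
    and G: "antimono_on {0<..pi} G"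
    and ab: "0 \<le> a" "b \<le> pi" and x: "x \<in> {0<..pi}"
  shows "norm (freq_step f T a b x) \<le> G x"
proof (cases "freq_cell T x \<in> freq_indices T a b")
  case True
  define k where "k = freq_cell T x"
  have "1 \<le> k" "2 * k \<le> int T" using freq_indices_bounds[OF ab True] by (simp_all add: k_def)
  then have "T > 0" "lam T k \<in> {0<..pi}" using lam_pos_le_pi[of k T] by auto
  moreover have "x \<le> lam T k" using lam_freq_cell_bounds(1)[OF \<open>T > 0\<close>] by (simp add: k_def)
  ultimately have "norm (f (lam T k)) \<le> G x"
    using fG x monotone_onD[OF G] by (meson order_trans)
  then show ?thesis using True by (simp add: freq_step_def k_def)
next
  case False
  have "0 \<le> G x" using fG[OF x] norm_ge_zero order_trans by blast
  then show ?thesis using False by (simp add: freq_step_def)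
qed

lemma tendsto_freq_step:
  assumes f: "continuous_on {0<..pi} f"
    and ab: "0 \<le> a" "a \<le> b" "b \<le> pi" and x: "x \<in> {0<..pi} - {a, b}"
  shows "(\<lambda>T. freq_step f T a b x) \<longlonglongrightarrow> (if x \<in> {a<..<b} then f x else 0)"
proof -
  have mem: "\<forall>\<^sub>F T in sequentially. freq_cell T x \<in> freq_indices T a b \<longleftrightarrow> x \<in> {a<..<b}"
    using ab x by (intro eventually_freq_cell_mem_iff) auto
  show ?thesis
  proof (cases "x \<in> {a<..<b}")
    case True
    then have "isCont f x"
      using ab x continuous_on_interior[OF f, of x] by simp
    then have "(\<lambda>T. f (lam T (freq_cell T x))) \<longlonglongrightarrow> f x"
      using tendsto_lam_freq_cell by (rule isCont_tendsto_compose)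
    moreover have "\<forall>\<^sub>F T in sequentially. f (lam T (freq_cell T x)) = freq_step f T a b x"
      using mem True by (auto simp: freq_step_def elim: eventually_mono)
    ultimately show ?thesis
      using True by (simp add: Lim_transform_eventually)
  next
    case False
    with mem have "\<forall>\<^sub>F T in sequentially. freq_step f T a b x = 0"
      by (auto simp: freq_step_def elim: eventually_mono)
    then have "(\<lambda>T. freq_step f T a b x) \<longlonglongrightarrow> 0" by (rule tendsto_eventually)
    then show ?thesis by (simp only: False if_False)
  qed
qed

lemma tendsto_freq_Riemann_sum:
  fixes f :: "real \<Rightarrow> 'a::euclidean_space"
  assumes f: "continuous_on {0<..pi} f"
    and fG: "\<And>x. x \<in> {0<..pi} \<Longrightarrow> norm (f x) \<le> G x"
    and G: "antimono_on {0<..pi} G" "G integrable_on {0<..pi}"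
    and ab: "0 \<le> a" "a \<le> b" "b \<le> pi"
  shows "(\<lambda>T. freq_Riemann_sum f T a b) \<longlonglongrightarrow> integral {a..b} f"
proof -
  \<comment> \<open>the step functions need not converge at the endpoints \<open>a\<close> and \<open>b\<close>\<close>
  define S where "S = {0<..pi} - {a, b}"
  have spike: "negligible {x \<in> {0<..pi} - S. P x}" "negligible {x \<in> S - {0<..pi}. P x}" for P
    by (auto intro: negligible_subset[of "{a, b}"] simp: S_def)
  have step: "(freq_step f T a b has_integral freq_Riemann_sum f T a b) S" for T
    using has_integral_freq_step[OF ab(1,3)] has_integral_spike_set_eq[OF spike] by blast
  have "(\<lambda>T. integral S (freq_step f T a b)) \<longlonglongrightarrow> integral S (\<lambda>x. if x \<in> {a<..<b} then f x else 0)"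
  proof (rule dominated_convergence(2))
    show "G integrable_on S" using G(2) integrable_spike_set[OF _ spike] by blast
  qed (use step norm_freq_step_le[OF fG G(1) ab(1,3)] tendsto_freq_step[OF f ab] in
       \<open>auto simp: S_def\<close>)
  moreover have "integral S (\<lambda>x. if x \<in> {a<..<b} then f x else 0) = integral {a..b} f"
  proof -
    have "{a<..<b} \<inter> S = {a<..<b}" using ab by (auto simp: S_def)
    then show ?thesis
      by (metis integral_restrict_Int integral_open_interval_real)
  qed
  ultimately show ?thesis using integral_unique[OF step] by simp
qed

section \<open>Fejer-type cosine sums\<close>

lemma sum_of_nat_mult_power:
  fixes w :: "'a::comm_ring_1"
  shows "(w - 1) * (\<Sum>s<n. of_nat s * w ^ s) = (of_nat n - 1) * w ^ n + 1 - (\<Sum>s<n. w ^ s)"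
  by (induction n) (simp_all add: algebra_simps)

lemma sum_Fejer_root_of_unity:
  fixes w :: "'a::field"
  assumes "w ^ n = 1" "w \<noteq> 1"
  shows "(\<Sum>s<n. (of_nat n - of_nat s) * w ^ s) = of_nat n / (1 - w)"
proof -
  have geometric: "(\<Sum>s<n. w ^ s) = 0" using assms by (simp add: sum_gp_strict)
  then have "(\<Sum>s<n. of_nat s * w ^ s) = of_nat n / (w - 1)"
    using sum_of_nat_mult_power[of w n] assms by (simp add: field_simps)
  then show ?thesis
    using geometric assms(2)
    by (simp add: left_diff_distrib sum_subtractf sum_distrib_left[symmetric] field_simps)
qed

lemma Re_divide_one_minus_cis:
  assumes "cis \<theta> \<noteq> 1"
  shows "Re (1 / (1 - cis \<theta>)) = 1 / 2"
proof -
  have "cos \<theta> \<noteq> 1"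
  proof
    assume cos: "cos \<theta> = 1"
    then have "(sin \<theta>)\<^sup>2 = 0" using sin_cos_squared_add[of \<theta>] by simp
    with cos assms show False by (simp add: complex_eq_iff)
  qed
  have "Re (1 / (1 - cis \<theta>)) = (1 - cos \<theta>) / ((1 - cos \<theta>)\<^sup>2 + (sin \<theta>)\<^sup>2)"
    by (simp add: Re_divide power2_eq_square)
  also have "(1 - cos \<theta>)\<^sup>2 + (sin \<theta>)\<^sup>2 = 2 * (1 - cos \<theta>)"
    using sin_cos_squared_add[of \<theta>] by (simp add: power2_eq_square algebra_simps)
  finally show ?thesis using \<open>cos \<theta> \<noteq> 1\<close> by simp
qed

lemma sum_lessThan_real_diff: "(\<Sum>s<n. real n - real s) = real n * (real n + 1) / 2"
proof -
  have "(\<Sum>s<n. real s) = real n * (real n - 1) / 2"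
    by (induction n) (simp_all add: field_simps)
  then show ?thesis by (simp add: sum_subtractf field_simps)
qed

lemma sum_Fejer_cos:
  fixes k :: int
  shows "(\<Sum>s=1..T-1. (real T - real s) * cos (real s * (2 * pi * k / real T))) =
           (if int T dvd k then real T * (real T - 1) / 2 else - real T / 2)"
proof (cases "T = 0")
  case False
  define \<theta> where "\<theta> = 2 * pi * k / real T"
  have "{..<T} = insert 0 {1..T-1}" using False by auto
  then have split: "(\<Sum>s<T. (real T - real s) * cos (real s * \<theta>)) =
      real T + (\<Sum>s=1..T-1. (real T - real s) * cos (real s * \<theta>))"
    by simp
  show ?thesis
  proof (cases "int T dvd k")
    case True
    then obtain m where "k = int T * m" by blast
    then have "cos (real s * \<theta>) = 1" for s
      using False cos_int_2pin[of "int s * m"] by (simp add: \<theta>_def mult_ac)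
    then show ?thesis
      using True split sum_lessThan_real_diff[of T] by (simp add: \<theta>_def field_simps)
  next
    case False
    have "real T * \<theta> = 2 * pi * k" using \<open>T \<noteq> 0\<close> by (simp add: \<theta>_def)
    then have "cis \<theta> ^ T = cis (2 * pi * k)" by (simp only: Complex.DeMoivre)
    also have "\<dots> = 1" by (simp add: complex_eq_iff)
    finally have "cis \<theta> ^ T = 1" .
    moreover have "cis \<theta> \<noteq> 1"
    proof
      assume "cis \<theta> = 1"
      then have "cos \<theta> = 1" by (simp add: complex_eq_iff)
      then obtain n :: int where "\<theta> = real_of_int n * 2 * pi"
        using cos_one_2pi_int by blast
      then have "real_of_int k = real T * real_of_int n"
        using \<open>T \<noteq> 0\<close> by (simp add: \<theta>_def field_simps)
      then have "k = int T * n"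
        by (metis of_int_eq_iff of_int_mult of_int_of_nat_eq)
      with False show False by simp
    qed
    ultimately have "(\<Sum>s<T. (of_nat T - of_nat s) * cis \<theta> ^ s) = of_nat T * (1 / (1 - cis \<theta>))"
      using sum_Fejer_root_of_unity[of "cis \<theta>" T] by simp
    then have "Re (\<Sum>s<T. (of_nat T - of_nat s) * cis \<theta> ^ s) = real T * Re (1 / (1 - cis \<theta>))"
      by (simp only: times_complex.sel complex_Re_of_nat complex_Im_of_nat mult_zero_left diff_zero)
    then have "Re (\<Sum>s<T. (of_nat T - of_nat s) * cis \<theta> ^ s) = real T / 2"
      using Re_divide_one_minus_cis[OF \<open>cis \<theta> \<noteq> 1\<close>] by simp
    then show ?thesis
      using False split by (simp add: Complex.DeMoivre \<theta>_def)
  qed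
qed simp

lemma sum_Fejer_cos_cos:
  fixes p q :: int
  assumes p: "1 \<le> p" "2 * p \<le> int T" and q: "1 \<le> q" "2 * q \<le> int T"
  shows "(\<Sum>s=1..T-1. (real T - real s) * (cos (real s * lam T p) * cos (real s * lam T q))) =
           (if p = q then (real T)\<^sup>2 / 4 else 0) + (if p = q \<and> 2 * p = int T then (real T)\<^sup>2 / 4 else 0)
           - real T / 2"
proof -
  define F where "F k = (\<Sum>s=1..T-1. (real T - real s) * cos (real s * (2 * pi * k / real T)))" for k :: int
  have "real T > 0" using p by simp
  then have "real s * lam T p - real s * lam T q = real s * (2 * pi * (p - q) / real T)"
    "real s * lam T p + real s * lam T q = real s * (2 * pi * (p + q) / real T)" for s
    by (simp_all add: lam_def field_simps)
  then have product: "cos (real s * lam T p) * cos (real s * lam T q) =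
      (cos (real s * (2 * pi * (p - q) / real T)) + cos (real s * (2 * pi * (p + q) / real T))) / 2" for s
    by (simp add: cos_times_cos)
  have "(\<Sum>s=1..T-1. (real T - real s) * (cos (real s * lam T p) * cos (real s * lam T q))) =
      (\<Sum>s=1..T-1. (real T - real s) * cos (real s * (2 * pi * (p - q) / real T)) / 2
                  + (real T - real s) * cos (real s * (2 * pi * (p + q) / real T)) / 2)"
    unfolding product by (simp add: add_divide_distrib distrib_left)
  also have "\<dots> = F (p - q) / 2 + F (p + q) / 2"
    by (simp add: F_def sum.distrib sum_divide_distrib)
  finally have sum_eq: "(\<Sum>s=1..T-1. (real T - real s) * (cos (real s * lam T p) * cos (real s * lam T q))) =
      F (p - q) / 2 + F (p + q) / 2" .
  have F_eq: "F k = (if int T dvd k then real T * (real T - 1) / 2 else - real T / 2)" for k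
    unfolding F_def by (rule sum_Fejer_cos)
  have "int T dvd (p - q) \<longleftrightarrow> p = q"
    using p q dvd_imp_le_int[of "p - q" "int T"] by (cases "p = q") auto
  moreover have "int T dvd (p + q) \<longleftrightarrow> p = q \<and> 2 * p = int T"
    using p q dvd_imp_le_int[of "p + q" "int T"] by auto
  ultimately show ?thesis
    unfolding sum_eq F_eq by (auto simp: field_simps power2_eq_square)
qed

section \<open>An exact formula for the double sum\<close>

lemma sum_triangle_swap:
  fixes F :: "nat \<Rightarrow> 'a::real_vector"
  shows "(\<Sum>t=1..n-1. \<Sum>s=1..n-t. F s) = (\<Sum>s=1..n-1. real (n - s) *\<^sub>R F s)"
proof -
  have "(\<Sum>t=1..n-1. \<Sum>s=1..n-t. F s) = (\<Sum>t=1..n-1. \<Sum>s\<in>{s\<in>{1..n-1}. s \<le> n - t}. F s)"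
    by (intro sum.cong) auto
  also have "\<dots> = (\<Sum>s=1..n-1. \<Sum>t\<in>{t\<in>{1..n-1}. s \<le> n - t}. F s)"
    by (rule sum.swap_restrict) auto
  also have "\<dots> = (\<Sum>s=1..n-1. real (n - s) *\<^sub>R F s)"
  proof (intro sum.cong refl)
    fix s assume "s \<in> {1..n-1}"
    then have "{t\<in>{1..n-1}. s \<le> n - t} = {1..n-s}" by auto
    then show "(\<Sum>t\<in>{t\<in>{1..n-1}. s \<le> n - t}. F s) = real (n - s) *\<^sub>R F s"
      by (simp add: sum_constant_scaleR)
  qed
  finally show ?thesis .
qed

lemma (in bounded_bilinear) sum_scaleR_prod_expand:
  "(\<Sum>s\<in>S. w s *\<^sub>R prod (\<Sum>p\<in>P. c s p *\<^sub>R u p) (\<Sum>q\<in>Q. c s q *\<^sub>R v q)) =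
     (\<Sum>p\<in>P. \<Sum>q\<in>Q. (\<Sum>s\<in>S. w s * (c s p * c s q)) *\<^sub>R prod (u p) (v q))"
proof -
  have "(\<Sum>s\<in>S. w s *\<^sub>R prod (\<Sum>p\<in>P. c s p *\<^sub>R u p) (\<Sum>q\<in>Q. c s q *\<^sub>R v q)) =
      (\<Sum>s\<in>S. \<Sum>p\<in>P. \<Sum>q\<in>Q. (w s * (c s p * c s q)) *\<^sub>R prod (u p) (v q))"
    by (simp add: sum_left sum_right scaleR_left scaleR_right scaleR_sum_right)
      (rule sum.cong[OF refl], subst sum.swap, simp add: mult_ac)
  also have "\<dots> = (\<Sum>p\<in>P. \<Sum>q\<in>Q. \<Sum>s\<in>S. (w s * (c s p * c s q)) *\<^sub>R prod (u p) (v q))"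
    by (subst sum.swap) (simp add: sum.swap[of _ S])
  finally show ?thesis by (simp add: scaleR_sum_left)
qed

lemma sum_sum_if_eq:
  fixes g :: "'i \<Rightarrow> 'a::comm_monoid_add"
  assumes "finite P" "finite Q"
  shows "(\<Sum>p\<in>P. \<Sum>q\<in>Q. if p = q then g p else 0) = (\<Sum>p\<in>P \<inter> Q. g p)"
  using assms by (simp add: sum.inter_restrict if_distrib cong: if_cong)

lemma norm_outer: "norm (outer a b) = norm a * norm b"
proof -
  have "outer a b $ i = a $ i *\<^sub>R b" for i by (simp add: outer_def vec_eq_iff)
  then have "norm (outer a b) = L2_set (\<lambda>i. \<bar>a $ i\<bar> * norm b) UNIV"
    unfolding norm_vec_def[of "outer a b"] by simp
  also have "\<dots> = norm a * norm b"
    unfolding norm_vec_def[of a] by (simp add: L2_set_left_distrib)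
  finally show ?thesis .
qed

lemma bounded_bilinear_outer: "bounded_bilinear outer"
proof
  show "\<exists>K. \<forall>a b. norm (outer a b) \<le> norm a * norm b * K"
    by (rule exI[of _ 1]) (simp add: norm_outer)
qed (simp_all add: outer_def vec_eq_iff algebra_simps)

lemma cs_eq_freq_sum:
  "cs \<zeta> T s \<mu> \<theta> = (2 / (real T * sqrt (real (T div 2)))) *\<^sub>R
     (\<Sum>p\<in>freq_indices T \<mu> \<theta>. cos (real s * lam T p) *\<^sub>R \<zeta> (lam T p))"
  by (simp add: cs_def freq_indices_def)

lemma sum_outer_cs_eq_kernel:
  fixes \<zeta> :: "real \<Rightarrow> real ^ 'p"
  shows "(\<Sum>t=1..T-1. \<Sum>s=1..T-t. outer (cs \<zeta> T s \<mu> \<theta>1) (cs \<zeta> T s \<mu> \<theta>2)) =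
      (4 / ((real T)\<^sup>2 * real (T div 2))) *\<^sub>R
      (\<Sum>p\<in>freq_indices T \<mu> \<theta>1. \<Sum>q\<in>freq_indices T \<mu> \<theta>2.
         (\<Sum>s=1..T-1. (real T - real s) * (cos (real s * lam T p) * cos (real s * lam T q))) *\<^sub>R
         outer (\<zeta> (lam T p)) (\<zeta> (lam T q)))"
proof -
  interpret outer: bounded_bilinear outer by (rule bounded_bilinear_outer)
  define C where "C = 2 / (real T * sqrt (real (T div 2)))"
  define X where "X \<theta> s = (\<Sum>p\<in>freq_indices T \<mu> \<theta>. cos (real s * lam T p) *\<^sub>R \<zeta> (lam T p))" for \<theta> s
  have "(\<Sum>t=1..T-1. \<Sum>s=1..T-t. outer (cs \<zeta> T s \<mu> \<theta>1) (cs \<zeta> T s \<mu> \<theta>2)) =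
      (\<Sum>s=1..T-1. (real T - real s) *\<^sub>R outer (cs \<zeta> T s \<mu> \<theta>1) (cs \<zeta> T s \<mu> \<theta>2))"
    unfolding sum_triangle_swap by (intro sum.cong) auto
  also have "\<dots> = C\<^sup>2 *\<^sub>R (\<Sum>s=1..T-1. (real T - real s) *\<^sub>R outer (X \<theta>1 s) (X \<theta>2 s))"
  proof -
    have "cs \<zeta> T s \<mu> \<theta> = C *\<^sub>R X \<theta> s" for \<theta> s by (simp add: cs_eq_freq_sum C_def X_def)
    then show ?thesis
      by (simp add: outer.scaleR_left outer.scaleR_right scaleR_sum_right power2_eq_square
          scaleR_left_commute mult_ac)
  qed
  also have "C\<^sup>2 = 4 / ((real T)\<^sup>2 * real (T div 2))"
    by (simp add: C_def power_divide power_mult_distrib)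
  finally show ?thesis
    unfolding X_def outer.sum_scaleR_prod_expand .
qed

lemma sum_sum_Fejer_coeff_scaleR:
  fixes h :: "int \<Rightarrow> int \<Rightarrow> 'a::real_vector"
  assumes "finite P" "finite Q"
  shows "(\<Sum>p\<in>P. \<Sum>q\<in>Q. ((if p = q then A else 0) + (if p = q \<and> 2 * p = n then A else 0) - B) *\<^sub>R h p q) =
    A *\<^sub>R (\<Sum>p\<in>P \<inter> Q. h p p) + A *\<^sub>R (\<Sum>p\<in>{p\<in>P \<inter> Q. 2 * p = n}. h p p)
      - B *\<^sub>R (\<Sum>p\<in>P. \<Sum>q\<in>Q. h p q)"
proof -
  have "((if p = q then A else 0) + (if p = q \<and> 2 * p = n then A else 0) - B) *\<^sub>R h p q =
      (if p = q then A *\<^sub>R h p p else 0) + (if p = q then if 2 * p = n then A *\<^sub>R h p p else 0 else 0)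
        - B *\<^sub>R h p q" for p q
    by (simp add: scaleR_diff_left scaleR_add_left)
  moreover have "(\<Sum>p\<in>P \<inter> Q. if 2 * p = n then A *\<^sub>R h p p else 0) =
      (\<Sum>p\<in>{p\<in>P \<inter> Q. 2 * p = n}. A *\<^sub>R h p p)"
    using assms by (intro sum.inter_filter[symmetric]) simp
  ultimately show ?thesis
    by (simp only: sum.distrib sum_subtractf sum_sum_if_eq[OF assms] scaleR_sum_right)
qed

lemma sum_outer_cs_eq:
  fixes \<zeta> :: "real \<Rightarrow> real ^ 'p"
  assumes "0 \<le> \<mu>" "\<theta>1 \<le> pi" "\<theta>2 \<le> pi"
  shows "(\<Sum>t=1..T-1. \<Sum>s=1..T-t. outer (cs \<zeta> T s \<mu> \<theta>1) (cs \<zeta> T s \<mu> \<theta>2)) =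
      (1 / real (T div 2)) *\<^sub>R (\<Sum>p\<in>freq_indices T \<mu> (min \<theta>1 \<theta>2). outer (\<zeta> (lam T p)) (\<zeta> (lam T p)))
    + (1 / real (T div 2)) *\<^sub>R
        (\<Sum>p\<in>{p\<in>freq_indices T \<mu> (min \<theta>1 \<theta>2). 2 * p = int T}. outer (\<zeta> (lam T p)) (\<zeta> (lam T p)))
    - (2 / (real T * real (T div 2))) *\<^sub>R
        outer (\<Sum>p\<in>freq_indices T \<mu> \<theta>1. \<zeta> (lam T p)) (\<Sum>p\<in>freq_indices T \<mu> \<theta>2. \<zeta> (lam T p))"
proof -
  interpret outer: bounded_bilinear outer by (rule bounded_bilinear_outer)
  define P1 where "P1 = freq_indices T \<mu> \<theta>1"
  define P2 where "P2 = freq_indices T \<mu> \<theta>2"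
  define h where "h p q = outer (\<zeta> (lam T p)) (\<zeta> (lam T q))" for p q
  have kernel: "(\<Sum>p\<in>P1. \<Sum>q\<in>P2.
          (\<Sum>s=1..T-1. (real T - real s) * (cos (real s * lam T p) * cos (real s * lam T q))) *\<^sub>R h p q) =
      (\<Sum>p\<in>P1. \<Sum>q\<in>P2. ((if p = q then (real T)\<^sup>2 / 4 else 0)
          + (if p = q \<and> 2 * p = int T then (real T)\<^sup>2 / 4 else 0) - real T / 2) *\<^sub>R h p q)"
  proof (intro sum.cong refl)
    fix p q assume "p \<in> P1" "q \<in> P2"
    then have "1 \<le> p" "2 * p \<le> int T" "1 \<le> q" "2 * q \<le> int T"
      using freq_indices_bounds[OF assms(1,2)] freq_indices_bounds[OF assms(1,3)]
      by (auto simp: P1_def P2_def)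
    then show "(\<Sum>s=1..T-1. (real T - real s) * (cos (real s * lam T p) * cos (real s * lam T q))) *\<^sub>R h p q =
        ((if p = q then (real T)\<^sup>2 / 4 else 0)
          + (if p = q \<and> 2 * p = int T then (real T)\<^sup>2 / 4 else 0) - real T / 2) *\<^sub>R h p q"
      by (simp only: sum_Fejer_cos_cos)
  qed
  have outer_sums: "outer (\<Sum>p\<in>P1. \<zeta> (lam T p)) (\<Sum>q\<in>P2. \<zeta> (lam T q)) = (\<Sum>p\<in>P1. \<Sum>q\<in>P2. h p q)"
    unfolding outer.sum_left by (simp only: outer.sum_right h_def)
  have scalars: "4 / ((real T)\<^sup>2 * real (T div 2)) * ((real T)\<^sup>2 / 4) = 1 / real (T div 2)"
    "4 / ((real T)\<^sup>2 * real (T div 2)) * (real T / 2) = 2 / (real T * real (T div 2))"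
    by (cases "T = 0"; simp add: power2_eq_square)+
  have fin: "finite P1" "finite P2" by (simp_all add: P1_def P2_def)
  show ?thesis
    unfolding sum_outer_cs_eq_kernel P1_def[symmetric] P2_def[symmetric] h_def[symmetric] kernel
    by (simp only: sum_sum_Fejer_coeff_scaleR[OF fin] outer_sums[symmetric] scalars
        scaleR_add_right scaleR_diff_right scaleR_scaleR)
      (simp only: P1_def P2_def h_def freq_indices_Int_min)
qed

section \<open>Passage to the limit\<close>

lemma tendsto_inverse_half_nat: "(\<lambda>T. 1 / real (T div 2)) \<longlonglongrightarrow> 0"
proof -
  have "filterlim (\<lambda>T. real (T div 2)) at_top sequentially"
    by (rule filterlim_compose[OF filterlim_real_sequentially filterlim_at_top_div_const_nat]) simp
  then show ?thesis
    by (intro tendsto_divide_0[OF tendsto_const] filterlim_at_top_imp_at_infinity)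
qed

lemma tendsto_real_div_half_nat: "(\<lambda>T. real T / real (T div 2)) \<longlonglongrightarrow> 2"
proof -
  have "(\<lambda>T. real (T mod 2) / real (T div 2)) \<longlonglongrightarrow> 0"
  proof (rule Lim_null_comparison)
    show "\<forall>\<^sub>F T in sequentially. norm (real (T mod 2) / real (T div 2)) \<le> 1 / real (T div 2)"
      by (simp add: divide_right_mono)
  qed (rule tendsto_inverse_half_nat)
  then have "(\<lambda>T. 2 + real (T mod 2) / real (T div 2)) \<longlonglongrightarrow> 2"
    using tendsto_add[OF tendsto_const[of 2]] by fastforce
  moreover have "\<forall>\<^sub>F T in sequentially. 2 + real (T mod 2) / real (T div 2) = real T / real (T div 2)"
  proof (rule eventually_mono[OF eventually_ge_at_top[of 2]])
    fix T :: nat assume "2 \<le> T"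
    then have "real (T div 2) > 0" by simp
    moreover have "real T = real (2 * (T div 2) + T mod 2)" by simp
    then have "real T = 2 * real (T div 2) + real (T mod 2)"
      by (simp only: of_nat_add of_nat_mult of_nat_numeral)
    ultimately show "2 + real (T mod 2) / real (T div 2) = real T / real (T div 2)"
      by (simp add: field_simps)
  qed
  ultimately show ?thesis by (rule Lim_transform_eventually)
qed

lemma tendsto_half_frequency_term:
  fixes f :: "real \<Rightarrow> 'a::real_normed_vector"
  shows "(\<lambda>T. (1 / real (T div 2)) *\<^sub>R (\<Sum>p\<in>{p\<in>freq_indices T a b. 2 * p = int T}. f (lam T p)))
           \<longlonglongrightarrow> 0"
proof (rule Lim_null_comparison)
  show "\<forall>\<^sub>F T in sequentially.
      norm ((1 / real (T div 2)) *\<^sub>R (\<Sum>p\<in>{p\<in>freq_indices T a b. 2 * p = int T}. f (lam T p)))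
        \<le> norm (f pi) * (1 / real (T div 2))"
  proof (rule eventually_mono[OF eventually_gt_at_top[of 0]])
    fix T :: nat assume "T > 0"
    define Q where "Q = {p\<in>freq_indices T a b. 2 * p = int T}"
    \<comment> \<open>the only candidate is \<open>p = T / 2\<close>, where \<open>lam T p = pi\<close>\<close>
    have "Q \<subseteq> {int T div 2}" by (auto simp: Q_def)
    then have "card Q \<le> 1" using card_mono[of "{int T div 2}" Q] by simp
    have "lam T p = pi" if "p \<in> Q" for p
      using that \<open>T > 0\<close> by (auto simp: Q_def lam_def field_simps)
    then have "norm (\<Sum>p\<in>Q. f (lam T p)) = real (card Q) * norm (f pi)"
      by (simp add: sum_constant_scaleR)
    also have "\<dots> \<le> norm (f pi)"
      using \<open>card Q \<le> 1\<close> by (intro mult_left_le_one_le) auto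
    finally have "norm (\<Sum>p\<in>Q. f (lam T p)) \<le> norm (f pi)" .
    then show "norm ((1 / real (T div 2)) *\<^sub>R (\<Sum>p\<in>Q. f (lam T p))) \<le> norm (f pi) * (1 / real (T div 2))"
      by (simp add: divide_right_mono mult.commute)
  qed
  show "(\<lambda>T. norm (f pi) * (1 / real (T div 2))) \<longlonglongrightarrow> 0"
    using tendsto_mult[OF tendsto_const tendsto_inverse_half_nat, of "norm (f pi)"] by simp
qed

lemma tendsto_freq_Riemann_sum_outer:
  fixes \<zeta> :: "real \<Rightarrow> real ^ 'p"
  assumes \<zeta>: "continuous_on {0<..pi} \<zeta>"
    and \<zeta>G: "\<And>x. x \<in> {0<..pi} \<Longrightarrow> norm (\<zeta> x) \<le> G x"
    and G: "antimono_on {0<..pi} G" "(\<lambda>x. (G x)\<^sup>2) integrable_on {0<..pi}"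
    and ab: "0 \<le> a" "a \<le> b" "b \<le> pi"
  shows "(\<lambda>T. freq_Riemann_sum (\<lambda>u. outer (\<zeta> u) (\<zeta> u)) T a b)
           \<longlonglongrightarrow> integral {a..b} (\<lambda>u. outer (\<zeta> u) (\<zeta> u))"
proof (rule tendsto_freq_Riemann_sum[OF _ _ _ G(2) ab])
  show "continuous_on {0<..pi} (\<lambda>u. outer (\<zeta> u) (\<zeta> u))"
    by (intro bounded_bilinear.continuous_on[OF bounded_bilinear_outer] \<zeta>)
  show "norm (outer (\<zeta> x) (\<zeta> x)) \<le> (G x)\<^sup>2" if "x \<in> {0<..pi}" for x
    using \<zeta>G[OF that] by (simp add: norm_outer power2_eq_square mult_mono')
  have "0 \<le> G x" if "x \<in> {0<..pi}" for x
    using \<zeta>G[OF that] norm_ge_zero order_trans by blast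
  then show "antimono_on {0<..pi} (\<lambda>x. (G x)\<^sup>2)"
    using G(1) by (auto intro!: monotone_onI power_mono dest: monotone_onD)
qed

lemma tendsto_sum_outer_cs:
  fixes \<zeta> :: "real \<Rightarrow> real ^ 'p" and G :: "real \<Rightarrow> real"
  assumes \<zeta>: "continuous_on {0<..pi} \<zeta>"
    and \<zeta>G: "\<And>x. x \<in> {0<..pi} \<Longrightarrow> norm (\<zeta> x) \<le> G x"
    and G: "antimono_on {0<..pi} G" "G integrable_on {0<..pi}" "(\<lambda>x. (G x)\<^sup>2) integrable_on {0<..pi}"
    and \<mu>: "0 \<le> \<mu>" "\<mu> < \<theta>1" "\<mu> < \<theta>2" and \<theta>: "\<theta>1 \<le> pi" "\<theta>2 \<le> pi"
  shows "(\<lambda>T. \<Sum>t = 1 .. T - 1. \<Sum>s = 1 .. T - t. outer (cs \<zeta> T s \<mu> \<theta>1) (cs \<zeta> T s \<mu> \<theta>2))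
           \<longlonglongrightarrow> glim \<zeta> \<mu> \<theta>1 \<theta>2"
proof -
  interpret outer: bounded_bilinear outer by (rule bounded_bilinear_outer)
  define m where "m = min \<theta>1 \<theta>2"
  \<comment> \<open>\<open>r T * (2 pi / T) = 1 / (T div 2)\<close> and \<open>r T / pi * (2 pi / T)\<^sup>2 = 2 / (T * (T div 2))\<close>\<close>
  define r where "r T = real T / real (T div 2) / (2 * pi)" for T
  define E where "E T = (1 / real (T div 2)) *\<^sub>R
      (\<Sum>p\<in>{p\<in>freq_indices T \<mu> m. 2 * p = int T}. outer (\<zeta> (lam T p)) (\<zeta> (lam T p)))" for T
  have "(\<lambda>T. freq_Riemann_sum \<zeta> T \<mu> \<theta>1) \<longlonglongrightarrow> integral {\<mu>..\<theta>1} \<zeta>"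
    "(\<lambda>T. freq_Riemann_sum \<zeta> T \<mu> \<theta>2) \<longlonglongrightarrow> integral {\<mu>..\<theta>2} \<zeta>"
    using \<mu> \<theta> by (auto intro!: tendsto_freq_Riemann_sum[OF \<zeta> \<zeta>G G(1,2)])
  moreover have "(\<lambda>T. freq_Riemann_sum (\<lambda>u. outer (\<zeta> u) (\<zeta> u)) T \<mu> m)
      \<longlonglongrightarrow> integral {\<mu>..m} (\<lambda>u. outer (\<zeta> u) (\<zeta> u))"
    using \<mu> \<theta> by (intro tendsto_freq_Riemann_sum_outer[OF \<zeta> \<zeta>G G(1,3)]) (auto simp: m_def)
  moreover have "r \<longlonglongrightarrow> 1 / pi"
    unfolding r_def using tendsto_divide[OF tendsto_real_div_half_nat tendsto_const, of "2 * pi"] by simp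
  moreover have "E \<longlonglongrightarrow> 0"
    unfolding E_def by (rule tendsto_half_frequency_term)
  ultimately have "(\<lambda>T. r T *\<^sub>R freq_Riemann_sum (\<lambda>u. outer (\<zeta> u) (\<zeta> u)) T \<mu> m + E T
      - (r T / pi) *\<^sub>R outer (freq_Riemann_sum \<zeta> T \<mu> \<theta>1) (freq_Riemann_sum \<zeta> T \<mu> \<theta>2)) \<longlonglongrightarrow>
      (1 / pi) *\<^sub>R integral {\<mu>..m} (\<lambda>u. outer (\<zeta> u) (\<zeta> u)) + 0
      - (1 / pi / pi) *\<^sub>R outer (integral {\<mu>..\<theta>1} \<zeta>) (integral {\<mu>..\<theta>2} \<zeta>)"
    by (intro tendsto_intros outer.tendsto) auto
  moreover have "r T *\<^sub>R freq_Riemann_sum (\<lambda>u. outer (\<zeta> u) (\<zeta> u)) T \<mu> m + E T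
      - (r T / pi) *\<^sub>R outer (freq_Riemann_sum \<zeta> T \<mu> \<theta>1) (freq_Riemann_sum \<zeta> T \<mu> \<theta>2) =
      (\<Sum>t = 1 .. T - 1. \<Sum>s = 1 .. T - t. outer (cs \<zeta> T s \<mu> \<theta>1) (cs \<zeta> T s \<mu> \<theta>2))" for T
    unfolding sum_outer_cs_eq[OF \<mu>(1) \<theta>]
    by (cases "T = 0") (simp_all add: freq_Riemann_sum_def r_def E_def m_def
        outer.scaleR_left outer.scaleR_right)
  moreover have "(1 / pi) *\<^sub>R integral {\<mu>..m} (\<lambda>u. outer (\<zeta> u) (\<zeta> u)) + 0
      - (1 / pi / pi) *\<^sub>R outer (integral {\<mu>..\<theta>1} \<zeta>) (integral {\<mu>..\<theta>2} \<zeta>) = glim \<zeta> \<mu> \<theta>1 \<theta>2"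
    by (simp add: glim_def m_def outer.scaleR_left outer.scaleR_right)
  ultimately show ?thesis by simp
qed

theorem lemma5:
  fixes \<zeta> \<zeta>' :: "real \<Rightarrow> real ^ 'p" and K ell \<mu> \<theta>1 \<theta>2 :: real
  assumes deriv: "\<And>x. x \<in> {0<..pi} \<Longrightarrow> (\<zeta> has_vector_derivative \<zeta>' x) (at x within {0<..pi})"
    and cont: "continuous_on {0<..pi} \<zeta>'"
    and l: "ell \<ge> 1"
    and bound0: "\<And>x. x \<in> {0<..pi} \<Longrightarrow> norm (\<zeta> x) \<le> K * rpow \<bar>ln x\<bar> ell"
    and bound1: "\<And>x. x \<in> {0<..pi} \<Longrightarrow> norm (\<zeta>' x) \<le> K * (1 / x) * rpow \<bar>ln x\<bar> (ell - 1)"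
    and mu: "0 \<le> \<mu>" "\<mu> < \<theta>1" "\<mu> < \<theta>2"
    and th: "\<theta>1 \<le> pi" "\<theta>2 \<le> pi"
  shows "(\<lambda>T. \<Sum>t = 1 .. T - 1. \<Sum>s = 1 .. T - t.
            outer (cs \<zeta> T s \<mu> \<theta>1) (cs \<zeta> T s \<mu> \<theta>2))
         \<longlonglongrightarrow> glim \<zeta> \<mu> \<theta>1 \<theta>2"
proof -
  have "continuous_on {0<..pi} \<zeta>"
    using deriv has_vector_derivative_continuous continuous_on_eq_continuous_within by blast
  moreover have "K \<ge> 0"
  proof -
    have "0 < rpow \<bar>ln pi\<bar> ell" using pi_gt3 by (simp add: rpow_def)
    moreover have "0 \<le> K * rpow \<bar>ln pi\<bar> ell"
      using order_trans[OF norm_ge_zero bound0[of pi]] by simp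
    ultimately show ?thesis by (simp add: zero_le_mult_iff)
  qed
  moreover have "norm (\<zeta> x) \<le> K * (6 - ln x) powr ell" if x: "x \<in> {0<..pi}" for x
  proof -
    have "rpow \<bar>ln x\<bar> ell \<le> (6 - ln x) powr ell"
      using x l by (intro rpow_abs_ln_le_six_minus_ln_powr) auto
    then show ?thesis using bound0[OF x] mult_left_mono[OF _ \<open>K \<ge> 0\<close>] by (meson order_trans)
  qed
  ultimately show ?thesis
    using six_minus_ln_powr_majorant[of K ell] l
    by (intro tendsto_sum_outer_cs[where G = "\<lambda>x. K * (6 - ln x) powr ell"] mu th) auto
qed

end
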